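(* Let $\{\mathcal N,\gamma,\boldsymbol\ell,\ell^{(2)}\}$ be metric hypersurface data and $\stackrel{\circ}{\Sigma}=\pounds_n{\stackrel{\circ}{\nabla}}$. Then $$\begin{aligned}\stackrel{\circ}{\Sigma}{}^d{}_{ab}=&\,n^d\big(2{\stackrel{\circ}{\nabla}}_{(a}s_{b)}-n^{(2)}{\stackrel{\circ}{\nabla}}_a{\stackrel{\circ}{\nabla}}_b\ell^{(2)}-2{\stackrel{\circ}{\nabla}}_{(a}n^{(2)}{\stackrel{\circ}{\nabla}}_{b)}\ell^{(2)}+n(\ell^{(2)})U_{ab}\big)\\&+P^{dc}\big({\stackrel{\circ}{\nabla}}_aU_{bc}+{\stackrel{\circ}{\nabla}}_bU_{ca}-{\stackrel{\circ}{\nabla}}_cU_{ab}+(2s_c-n^{(2)}{\stackrel{\circ}{\nabla}}_c\ell^{(2)})U_{ab}+2F_{c(a}{\stackrel{\circ}{\nabla}}_{b)}n^{(2)}\big).\end{aligned}$$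
   Context: Metric hypersurface data $\{\mathcal N,\gamma,\boldsymbol\ell,\ell^{(2)}\}$: $\mathcal N$ smooth $\mathfrak n$-manifold, $\gamma$ symmetric $2$-covariant, $\boldsymbol\ell$ a one-form, $\ell^{(2)}$ a function, with $\boldsymbol{\mathcal A}|_p((W,a),(Z,b))=\gamma(W,Z)+a\boldsymbol\ell(Z)+b\boldsymbol\ell(W)+ab\ell^{(2)}$ non-degenerate on $T_p\mathcal N\times\mathbb R$. Its inverse $\mathcal A((\boldsymbol\alpha,a),(\boldsymbol\beta,b))=P(\boldsymbol\alpha,\boldsymbol\beta)+a\,n(\boldsymbol\beta)+b\,n(\boldsymbol\alpha)+ab\,n^{(2)}$ defines $P,n,n^{(2)}$ with $\gamma_{ab}n^b+n^{(2)}\ell_a=0$, $\ell_an^a+n^{(2)}\ell^{(2)}=1$, $P^{ab}\ell_b+\ell^{(2)}n^a=0$, $P^{ab}\gamma_{bc}+n^a\ell_c=\delta^a_c$. $\mathbf F=\frac12d\boldsymbol\ell$, $s_b=n^aF_{ab}$, $\mathbf U=\frac12\pounds_n\gamma+\boldsymbol\ell\otimes_sdn^{(2)}$ ($A\otimes_sB=\frac12(A\otimes B+B\otimes A)$). ${\stackrel{\circ}{\nabla}}$ is the unique torsion-free connection with $({\stackrel{\circ}{\nabla}}_X\gamma)(Z,W)=-\mathbf U(X,Z)\boldsymbol\ell(W)-\mathbf U(X,W)\boldsymbol\ell(Z)$, $({\stackrel{\circ}{\nabla}}_X\boldsymbol\ell)(Z)+({\stackrel{\circ}{\nabla}}_Z\boldsymbol\ell)(X)=-2\ell^{(2)}\mathbf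 U(X,Z)$. $\pounds_n{\stackrel{\circ}{\nabla}}$ is the $(1,2)$ tensor $\stackrel{\circ}{\Sigma}(X,W)=\pounds_n({\stackrel{\circ}{\nabla}}_XW)-{\stackrel{\circ}{\nabla}}_X(\pounds_nW)-{\stackrel{\circ}{\nabla}}_{\pounds_nX}W$, with components $\stackrel{\circ}{\Sigma}{}^d{}_{ab}$ ($X^aW^b$). Parentheses denote symmetrization with weight $1/2$. *)

theory Defs
  imports "HOL-Analysis.Analysis"
begin

text \<open>Everything is written in a coordinate chart: an open set Om of real^'n
(dimension CARD('n)).  Tensor fields are given by their components in the
coordinate basis.  Scalars: real^'n => real; (co)vectors: real^'n => 'n => real;
2-tensors: real^'n => 'n => 'n => real; connection coefficients
G x d a b = Gamma^d_{ab}, i.e. nabla_{d_a} d_b = sum_d Gamma^d_{ab} d_d.\<close>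

definition pd :: "'n::finite \<Rightarrow> (real^'n \<Rightarrow> real) \<Rightarrow> real^'n \<Rightarrow> real" where
  "pd i f x = deriv (\<lambda>t. f (x + t *\<^sub>R axis i 1)) 0"

fun pds :: "'n::finite list \<Rightarrow> (real^'n \<Rightarrow> real) \<Rightarrow> real^'n \<Rightarrow> real" where
  "pds [] f = f"
| "pds (i # is) f = pd i (pds is f)"

definition smooth_on :: "(real^'n::finite) set \<Rightarrow> (real^'n \<Rightarrow> real) \<Rightarrow> bool" where
  "smooth_on Om f \<longleftrightarrow> (\<forall>is. continuous_on Om (pds is f) \<and>
     (\<forall>i. \<forall>x\<in>Om. (\<lambda>t. pds is f (x + t *\<^sub>R axis i 1)) differentiable (at 0)))"

definition metric_hypersurface_data ::
  "(real^'n::finite) set \<Rightarrow> (real^'n \<Rightarrow> 'n \<Rightarrow> 'n \<Rightarrow> real) \<Rightarrow> (real^'n \<Rightarrow> 'n \<Rightarrow> real)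
   \<Rightarrow> (real^'n \<Rightarrow> real) \<Rightarrow> bool" where
  "metric_hypersurface_data Om g l l2 \<longleftrightarrow> open Om \<and>
     (\<forall>a b. smooth_on Om (\<lambda>x. g x a b)) \<and> (\<forall>a. smooth_on Om (\<lambda>x. l x a)) \<and> smooth_on Om l2 \<and>
     (\<forall>x\<in>Om. \<forall>a b. g x a b = g x b a) \<and>
     (\<forall>x\<in>Om. \<forall>(W::'n \<Rightarrow> real) (w::real).
        (\<forall>(Z::'n \<Rightarrow> real) (z::real).
           (\<Sum>a\<in>UNIV. \<Sum>b\<in>UNIV. g x a b * W a * Z b) + w * (\<Sum>b\<in>UNIV. l x b * Z b)
           + z * (\<Sum>a\<in>UNIV. l x a * W a) + w * z * l2 x = 0)
        \<longrightarrow> (W = (\<lambda>_. 0) \<and> w = 0))"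

text \<open>P, n, n2 are the components of the inverse of the form A.\<close>
definition inverse_data ::
  "(real^'n::finite) set \<Rightarrow> (real^'n \<Rightarrow> 'n \<Rightarrow> 'n \<Rightarrow> real) \<Rightarrow> (real^'n \<Rightarrow> 'n \<Rightarrow> real)
   \<Rightarrow> (real^'n \<Rightarrow> real) \<Rightarrow> (real^'n \<Rightarrow> 'n \<Rightarrow> 'n \<Rightarrow> real) \<Rightarrow> (real^'n \<Rightarrow> 'n \<Rightarrow> real)
   \<Rightarrow> (real^'n \<Rightarrow> real) \<Rightarrow> bool" where
  "inverse_data Om g l l2 P n n2 \<longleftrightarrow> (\<forall>x\<in>Om.
     (\<forall>a b. P x a b = P x b a) \<and>
     (\<forall>a. (\<Sum>b\<in>UNIV. g x a b * n x b) + n2 x * l x a = 0) \<and>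
     (\<Sum>a\<in>UNIV. l x a * n x a) + n2 x * l2 x = 1 \<and>
     (\<forall>a. (\<Sum>b\<in>UNIV. P x a b * l x b) + l2 x * n x a = 0) \<and>
     (\<forall>a c. (\<Sum>b\<in>UNIV. P x a b * g x b c) + n x a * l x c = (if a = c then 1 else 0)))"

definition FF :: "(real^'n::finite \<Rightarrow> 'n \<Rightarrow> real) \<Rightarrow> real^'n \<Rightarrow> 'n \<Rightarrow> 'n \<Rightarrow> real" where
  "FF l x a b = (pd a (\<lambda>y. l y b) x - pd b (\<lambda>y. l y a) x) / 2"

definition ss :: "(real^'n::finite \<Rightarrow> 'n \<Rightarrow> real) \<Rightarrow> (real^'n \<Rightarrow> 'n \<Rightarrow> real) \<Rightarrow> real^'n \<Rightarrow> 'n \<Rightarrow> real" where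
  "ss n l x b = (\<Sum>a\<in>UNIV. n x a * FF l x a b)"

text \<open>U = 1/2 Lie_n gamma + l (x)_s d n2.\<close>
definition UU :: "(real^'n::finite \<Rightarrow> 'n \<Rightarrow> 'n \<Rightarrow> real) \<Rightarrow> (real^'n \<Rightarrow> 'n \<Rightarrow> real)
   \<Rightarrow> (real^'n \<Rightarrow> 'n \<Rightarrow> real) \<Rightarrow> (real^'n \<Rightarrow> real) \<Rightarrow> real^'n \<Rightarrow> 'n \<Rightarrow> 'n \<Rightarrow> real" where
  "UU g l n n2 x a b =
     (\<Sum>c\<in>UNIV. n x c * pd c (\<lambda>y. g y a b) x + g x c b * pd a (\<lambda>y. n y c) x
                + g x a c * pd b (\<lambda>y. n y c) x) / 2
     + (l x a * pd b n2 x + l x b * pd a n2 x) / 2"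

definition cov1 :: "(real^'n::finite \<Rightarrow> 'n \<Rightarrow> 'n \<Rightarrow> 'n \<Rightarrow> real) \<Rightarrow> (real^'n \<Rightarrow> 'n \<Rightarrow> real)
   \<Rightarrow> real^'n \<Rightarrow> 'n \<Rightarrow> 'n \<Rightarrow> real" where
  "cov1 G w x a b = pd a (\<lambda>y. w y b) x - (\<Sum>c\<in>UNIV. G x c a b * w x c)"

definition cov2 :: "(real^'n::finite \<Rightarrow> 'n \<Rightarrow> 'n \<Rightarrow> 'n \<Rightarrow> real) \<Rightarrow> (real^'n \<Rightarrow> 'n \<Rightarrow> 'n \<Rightarrow> real)
   \<Rightarrow> real^'n \<Rightarrow> 'n \<Rightarrow> 'n \<Rightarrow> 'n \<Rightarrow> real" where
  "cov2 G T x a b c = pd a (\<lambda>y. T y b c) x - (\<Sum>e\<in>UNIV. G x e a b * T x e c)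
     - (\<Sum>e\<in>UNIV. G x e a c * T x b e)"

definition covv :: "(real^'n::finite \<Rightarrow> 'n \<Rightarrow> 'n \<Rightarrow> 'n \<Rightarrow> real) \<Rightarrow> (real^'n \<Rightarrow> 'n \<Rightarrow> real)
   \<Rightarrow> real^'n \<Rightarrow> 'n \<Rightarrow> 'n \<Rightarrow> real" where
  "covv G V x a d = pd a (\<lambda>y. V y d) x + (\<Sum>c\<in>UNIV. G x d a c * V x c)"

definition nablaXW :: "(real^'n::finite \<Rightarrow> 'n \<Rightarrow> 'n \<Rightarrow> 'n \<Rightarrow> real) \<Rightarrow> (real^'n \<Rightarrow> 'n \<Rightarrow> real)
   \<Rightarrow> (real^'n \<Rightarrow> 'n \<Rightarrow> real) \<Rightarrow> real^'n \<Rightarrow> 'n \<Rightarrow> real" where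
  "nablaXW G X W x d = (\<Sum>a\<in>UNIV. X x a * covv G W x a d)"

definition hess :: "(real^'n::finite \<Rightarrow> 'n \<Rightarrow> 'n \<Rightarrow> 'n \<Rightarrow> real) \<Rightarrow> (real^'n \<Rightarrow> real)
   \<Rightarrow> real^'n \<Rightarrow> 'n \<Rightarrow> 'n \<Rightarrow> real" where
  "hess G f x a b = pd a (pd b f) x - (\<Sum>c\<in>UNIV. G x c a b * pd c f x)"

definition lieV :: "(real^'n::finite \<Rightarrow> 'n \<Rightarrow> real) \<Rightarrow> (real^'n \<Rightarrow> 'n \<Rightarrow> real) \<Rightarrow> real^'n \<Rightarrow> 'n \<Rightarrow> real" where
  "lieV n W x d = (\<Sum>c\<in>UNIV. n x c * pd c (\<lambda>y. W y d) x - W x c * pd c (\<lambda>y. n y d) x)"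

definition Sigma_circ :: "(real^'n::finite \<Rightarrow> 'n \<Rightarrow> 'n \<Rightarrow> 'n \<Rightarrow> real) \<Rightarrow> (real^'n \<Rightarrow> 'n \<Rightarrow> real)
   \<Rightarrow> (real^'n \<Rightarrow> 'n \<Rightarrow> real) \<Rightarrow> (real^'n \<Rightarrow> 'n \<Rightarrow> real) \<Rightarrow> real^'n \<Rightarrow> 'n \<Rightarrow> real" where
  "Sigma_circ G n X W x d = lieV n (nablaXW G X W) x d - nablaXW G X (lieV n W) x d
     - nablaXW G (lieV n X) W x d"

definition circ_connection ::
  "(real^'n::finite) set \<Rightarrow> (real^'n \<Rightarrow> 'n \<Rightarrow> 'n \<Rightarrow> real) \<Rightarrow> (real^'n \<Rightarrow> 'n \<Rightarrow> real)
   \<Rightarrow> (real^'n \<Rightarrow> real) \<Rightarrow> (real^'n \<Rightarrow> 'n \<Rightarrow> real) \<Rightarrow> (real^'n \<Rightarrow> real)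
   \<Rightarrow> (real^'n \<Rightarrow> 'n \<Rightarrow> 'n \<Rightarrow> 'n \<Rightarrow> real) \<Rightarrow> bool" where
  "circ_connection Om g l l2 n n2 G \<longleftrightarrow>
     (\<forall>d a b. smooth_on Om (\<lambda>x. G x d a b)) \<and>
     (\<forall>x\<in>Om. \<forall>d a b. G x d a b = G x d b a) \<and>
     (\<forall>x\<in>Om. \<forall>a b c. cov2 G g x a b c = - UU g l n n2 x a b * l x c - UU g l n n2 x a c * l x b) \<and>
     (\<forall>x\<in>Om. \<forall>a b. cov1 G l x a b + cov1 G l x b a = - 2 * l2 x * UU g l n n2 x a b)"

definition rhs :: "(real^'n::finite \<Rightarrow> 'n \<Rightarrow> 'n \<Rightarrow> real) \<Rightarrow> (real^'n \<Rightarrow> 'n \<Rightarrow> real)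
   \<Rightarrow> (real^'n \<Rightarrow> real) \<Rightarrow> (real^'n \<Rightarrow> 'n \<Rightarrow> 'n \<Rightarrow> real) \<Rightarrow> (real^'n \<Rightarrow> 'n \<Rightarrow> real)
   \<Rightarrow> (real^'n \<Rightarrow> real) \<Rightarrow> (real^'n \<Rightarrow> 'n \<Rightarrow> 'n \<Rightarrow> 'n \<Rightarrow> real)
   \<Rightarrow> real^'n \<Rightarrow> 'n \<Rightarrow> 'n \<Rightarrow> 'n \<Rightarrow> real" where
  "rhs g l l2 P n n2 G x d a b =
     n x d * ( cov1 G (ss n l) x a b + cov1 G (ss n l) x b a
             - n2 x * hess G l2 x a b
             - (pd a n2 x * pd b l2 x + pd b n2 x * pd a l2 x)
             + (\<Sum>c\<in>UNIV. n x c * pd c l2 x) * UU g l n n2 x a b )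
   + (\<Sum>c\<in>UNIV. P x d c *
        ( cov2 G (UU g l n n2) x a b c + cov2 G (UU g l n n2) x b c a - cov2 G (UU g l n n2) x c a b
        + (2 * ss n l x c - n2 x * pd c l2 x) * UU g l n n2 x a b
        + (FF l x c a * pd b n2 x + FF l x c b * pd a n2 x)))"

end

(* Sigma = Lie_n nabla measures how Lie_n and nabla fail to commute: for every covariant
   tensor T, Lie_n (nabla T) - nabla (Lie_n T) = - Sigma . T, with Sigma symmetric in its
   lower indices.  Apply this to gamma and to l, whose covariant derivatives are prescribed
   in terms of U by the defining identities of nabla, using Lie_n gamma = 2 U - l (x) dn2 -
   dn2 (x) l and Lie_n l = 2 s - d(n2 l2) (differentiate l(n) + n2 l2 = 1).  For gamma, a
   Koszul-type inversion of the three cyclic permutations yields gamma_cf Sigma^f_ab; for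
   l, the symmetrised identity yields l_f Sigma^f_ab.  Since (P, n, n2) inverts
   (gamma, l, l2), Sigma^d = P^dc gamma_cf Sigma^f + n^d l_f Sigma^f, which is the formula.
   Everything is computed in the chart; the only analytic input is Schwarz's theorem. *)

theory Submission
  imports Defs
begin

section \<open>Partial derivatives in a chart\<close>

definition pd_differentiable :: "'n::finite \<Rightarrow> (real^'n \<Rightarrow> real) \<Rightarrow> real^'n \<Rightarrow> bool" where
  "pd_differentiable i f x \<longleftrightarrow> (\<lambda>t. f (x + t *\<^sub>R axis i 1)) differentiable (at 0)"

lemma has_field_derivative_pd:
  "pd_differentiable i f x \<Longrightarrow> ((\<lambda>t. f (x + t *\<^sub>R axis i 1)) has_field_derivative pd i f x) (at 0)"
  unfolding pd_differentiable_def pd_def using DERIV_deriv_iff_real_differentiable by blast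

lemma pd_differentiableI:
  "((\<lambda>t. f (x + t *\<^sub>R axis i 1)) has_field_derivative D) (at 0) \<Longrightarrow> pd_differentiable i f x"
  unfolding pd_differentiable_def using real_differentiable_def by blast

lemma pd_eqI: "((\<lambda>t. f (x + t *\<^sub>R axis i 1)) has_field_derivative D) (at 0) \<Longrightarrow> pd i f x = D"
  unfolding pd_def by (rule DERIV_imp_deriv)

lemma pd_const [simp]: "pd i (\<lambda>y. c) x = 0"
  by (rule pd_eqI) auto

lemma pd_differentiable_const [simp]: "pd_differentiable i (\<lambda>y. c) x"
  by (rule pd_differentiableI[where D = 0]) auto

context
  fixes i :: "'n::finite" and x :: "real^'n" and f g :: "real^'n \<Rightarrow> real"
  assumes f: "pd_differentiable i f x" and g: "pd_differentiable i g x"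
begin

lemma pd_add [simp]: "pd i (\<lambda>y. f y + g y) x = pd i f x + pd i g x"
  and pd_diff [simp]: "pd i (\<lambda>y. f y - g y) x = pd i f x - pd i g x"
  and pd_mult [simp]: "pd i (\<lambda>y. f y * g y) x = pd i f x * g x + f x * pd i g x"
  by (rule pd_eqI; use f g in \<open>auto intro!: derivative_eq_intros has_field_derivative_pd\<close>)+

lemma pd_differentiable_add [simp]: "pd_differentiable i (\<lambda>y. f y + g y) x"
  and pd_differentiable_diff [simp]: "pd_differentiable i (\<lambda>y. f y - g y) x"
  and pd_differentiable_mult [simp]: "pd_differentiable i (\<lambda>y. f y * g y) x"
  by (rule pd_differentiableI; use f g in \<open>auto intro!: derivative_eq_intros has_field_derivative_pd\<close>)+

end

lemma pd_minus [simp]: "pd_differentiable i f x \<Longrightarrow> pd i (\<lambda>y. - f y) x = - pd i f x"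
  by (rule pd_eqI) (auto intro!: derivative_eq_intros has_field_derivative_pd)

lemma pd_differentiable_minus [simp]: "pd_differentiable i f x \<Longrightarrow> pd_differentiable i (\<lambda>y. - f y) x"
  by (rule pd_differentiableI) (auto intro!: derivative_eq_intros has_field_derivative_pd)

lemma pd_divide_const [simp]: "pd_differentiable i f x \<Longrightarrow> pd i (\<lambda>y. f y / c) x = pd i f x / c"
  using pd_mult[where g = "\<lambda>_. inverse c"] by (simp add: divide_inverse)

lemma pd_differentiable_divide_const [simp]:
  "pd_differentiable i f x \<Longrightarrow> pd_differentiable i (\<lambda>y. f y / c) x"
  using pd_differentiable_mult[where g = "\<lambda>_. inverse c"] by (simp add: divide_inverse)

lemma pd_sum [simp]:
  "(\<And>k. k \<in> S \<Longrightarrow> pd_differentiable i (f k) x) \<Longrightarrow>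
   pd i (\<lambda>y. \<Sum>k\<in>S. f k y) x = (\<Sum>k\<in>S. pd i (f k) x)"
  by (rule pd_eqI) (auto intro!: derivative_eq_intros has_field_derivative_pd)

lemma pd_differentiable_sum [simp]:
  "(\<And>k. k \<in> S \<Longrightarrow> pd_differentiable i (f k) x) \<Longrightarrow> pd_differentiable i (\<lambda>y. \<Sum>k\<in>S. f k y) x"
  by (rule pd_differentiableI) (auto intro!: derivative_eq_intros has_field_derivative_pd)

lemma pd_cong_open:
  assumes "open Om" "x \<in> Om" "\<And>y. y \<in> Om \<Longrightarrow> f y = g y"
  shows "pd i f x = pd i g x"
proof -
  obtain r where r: "r > 0" "ball x r \<subseteq> Om" using assms(1,2) open_contains_ball by blast
  have "eventually (\<lambda>t. f (x + t *\<^sub>R axis i 1) = g (x + t *\<^sub>R axis i 1)) (nhds 0)"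
    unfolding eventually_nhds_metric
  proof (intro exI[of _ r] conjI allI impI)
    fix t :: real assume "dist t 0 < r"
    then have "x + t *\<^sub>R axis i 1 \<in> ball x r" by (simp add: dist_norm)
    then show "f (x + t *\<^sub>R axis i 1) = g (x + t *\<^sub>R axis i 1)" using r assms(3) by blast
  qed (use r in auto)
  then show ?thesis unfolding pd_def by (rule deriv_cong_ev) simp
qed

lemma smooth_on_pd_differentiable: "smooth_on Om f \<Longrightarrow> y \<in> Om \<Longrightarrow> pd_differentiable i f y"
  unfolding smooth_on_def pd_differentiable_def by (metis pds.simps(1))

lemma smooth_on_pd_pd_differentiable: "smooth_on Om f \<Longrightarrow> y \<in> Om \<Longrightarrow> pd_differentiable i (pd j f) y"
  unfolding smooth_on_def pd_differentiable_def by (metis pds.simps)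

lemma smooth_on_pd_differentiable_all:
  assumes "x \<in> Om" "\<forall>a. smooth_on Om (\<lambda>x. w x a)"
  shows "\<forall>i a. pd_differentiable i (\<lambda>z. w z a) x" "\<forall>i j a. pd_differentiable i (pd j (\<lambda>z. w z a)) x"
  using assms by (blast intro: smooth_on_pd_differentiable smooth_on_pd_pd_differentiable)+

lemma smooth_on_continuous_on_pd_pd: "smooth_on Om f \<Longrightarrow> continuous_on Om (pd a (pd b f))"
  unfolding smooth_on_def by (metis pds.simps)

lemma has_real_derivative_along_axis:
  assumes "pd_differentiable i f (p + s *\<^sub>R axis i 1)"
  shows "((\<lambda>s. f (p + s *\<^sub>R axis i 1)) has_real_derivative pd i f (p + s *\<^sub>R axis i 1)) (at s)"
proof -
  have "((\<lambda>r. f ((p + s *\<^sub>R axis i 1) + r *\<^sub>R axis i 1)) has_real_derivative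
      pd i f (p + s *\<^sub>R axis i 1)) (at 0)"
    using has_field_derivative_pd[OF assms] .
  then have "((\<lambda>r. f (p + (r + s) *\<^sub>R axis i 1)) has_real_derivative pd i f (p + s *\<^sub>R axis i 1)) (at 0)"
    by (simp add: algebra_simps scaleR_add_left)
  then show ?thesis using DERIV_shift[of "\<lambda>s. f (p + s *\<^sub>R axis i 1)" _ 0 s] by simp
qed

lemma mixed_difference_mvt:
  fixes x :: "real^'n::finite"
  assumes f: "smooth_on Om f" and h: "h > 0"
    and box: "\<And>s t. 0 \<le> s \<Longrightarrow> s \<le> h \<Longrightarrow> 0 \<le> t \<Longrightarrow> t \<le> h \<Longrightarrow>
         x + s *\<^sub>R axis a 1 + t *\<^sub>R axis b 1 \<in> Om"
  shows "\<exists>s t. 0 < s \<and> s < h \<and> 0 < t \<and> t < h \<and>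
    f (x + h *\<^sub>R axis a 1 + h *\<^sub>R axis b 1) - f (x + h *\<^sub>R axis a 1) - f (x + h *\<^sub>R axis b 1) + f x
      = h * h * pd b (pd a f) (x + s *\<^sub>R axis a 1 + t *\<^sub>R axis b 1)"
proof -
  define u where "u = (axis a 1 :: real^'n)"
  define v where "v = (axis b 1 :: real^'n)"
  define k where "k s = f ((x + h *\<^sub>R v) + s *\<^sub>R u) - f (x + s *\<^sub>R u)" for s
  have "DERIV k s :> pd a f ((x + h *\<^sub>R v) + s *\<^sub>R u) - pd a f (x + s *\<^sub>R u)"
    if "0 \<le> s" "s \<le> h" for s
  proof -
    have "(x + h *\<^sub>R v) + s *\<^sub>R u \<in> Om" "x + s *\<^sub>R u \<in> Om"
      using box[of s h] box[of s 0] that h by (simp_all add: u_def v_def algebra_simps)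
    then show ?thesis unfolding k_def u_def
      by (intro derivative_intros has_real_derivative_along_axis smooth_on_pd_differentiable[OF f])
        (auto simp: u_def)
  qed
  from MVT2[OF h this] obtain s where s: "0 < s" "s < h"
    "k h - k 0 = (h - 0) * (pd a f ((x + h *\<^sub>R v) + s *\<^sub>R u) - pd a f (x + s *\<^sub>R u))" by blast
  define m where "m t = pd a f ((x + s *\<^sub>R u) + t *\<^sub>R v)" for t
  have "DERIV m t :> pd b (pd a f) ((x + s *\<^sub>R u) + t *\<^sub>R v)" if "0 \<le> t" "t \<le> h" for t
  proof -
    have "(x + s *\<^sub>R u) + t *\<^sub>R v \<in> Om"
      using box[of s t] that s by (simp add: u_def v_def algebra_simps)
    then show ?thesis unfolding m_def v_def
      by (intro has_real_derivative_along_axis smooth_on_pd_pd_differentiable[OF f]) (auto simp: v_def)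
  qed
  from MVT2[OF h this] obtain t where t: "0 < t" "t < h"
    "m h - m 0 = (h - 0) * pd b (pd a f) ((x + s *\<^sub>R u) + t *\<^sub>R v)" by blast
  have "f (x + h *\<^sub>R u + h *\<^sub>R v) - f (x + h *\<^sub>R u) - f (x + h *\<^sub>R v) + f x = k h - k 0"
    by (simp add: k_def algebra_simps)
  also have "\<dots> = h * (m h - m 0)" using s(3) by (simp add: m_def algebra_simps)
  also have "\<dots> = h * h * pd b (pd a f) (x + s *\<^sub>R u + t *\<^sub>R v)" using t(3) by simp
  finally show ?thesis using s t unfolding u_def v_def by blast
qed

lemma mixed_pds_agree_nearby:
  fixes x :: "real^'n::finite"
  assumes "open Om" "x \<in> Om" and f: "smooth_on Om f" and "r > 0"
  shows "\<exists>p q. dist p x < r \<and> dist q x < r \<and> pd b (pd a f) p = pd a (pd b f) q"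
proof -
  obtain r0 where r0: "r0 > 0" "ball x r0 \<subseteq> Om" using assms(1,2) open_contains_ball by blast
  define h where "h = min r r0 / 4"
  have h: "h > 0" "2 * h < r" "2 * h < r0" using r0 \<open>r > 0\<close> by (auto simp: h_def)
  have near: "dist (x + s *\<^sub>R axis i 1 + t *\<^sub>R axis j 1) x \<le> 2 * h"
    if "0 \<le> s" "s \<le> h" "0 \<le> t" "t \<le> h" for s t and i j :: 'n
  proof -
    have "dist (x + s *\<^sub>R axis i 1 + t *\<^sub>R axis j 1) x = norm (s *\<^sub>R axis i (1::real) + t *\<^sub>R axis j 1)"
      by (simp add: dist_norm)
    also have "\<dots> \<le> norm (s *\<^sub>R axis i (1::real)) + norm (t *\<^sub>R axis j (1::real))"
      by (rule norm_triangle_ineq)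
    finally show ?thesis using that by simp
  qed
  have box: "x + s *\<^sub>R axis i 1 + t *\<^sub>R axis j 1 \<in> Om"
    if "0 \<le> s" "s \<le> h" "0 \<le> t" "t \<le> h" for s t and i j :: 'n
    using near[OF that, of i j] h r0 by (auto simp: dist_commute)
  obtain s t where st: "0 < s" "s < h" "0 < t" "t < h"
    "f (x + h *\<^sub>R axis a 1 + h *\<^sub>R axis b 1) - f (x + h *\<^sub>R axis a 1) - f (x + h *\<^sub>R axis b 1) + f x
      = h * h * pd b (pd a f) (x + s *\<^sub>R axis a 1 + t *\<^sub>R axis b 1)"
    using mixed_difference_mvt[OF f h(1) box] by blast
  obtain s' t' where st': "0 < s'" "s' < h" "0 < t'" "t' < h"
    "f (x + h *\<^sub>R axis b 1 + h *\<^sub>R axis a 1) - f (x + h *\<^sub>R axis b 1) - f (x + h *\<^sub>R axis a 1) + f x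
      = h * h * pd a (pd b f) (x + s' *\<^sub>R axis b 1 + t' *\<^sub>R axis a 1)"
    using mixed_difference_mvt[OF f h(1) box] by blast
  have "pd b (pd a f) (x + s *\<^sub>R axis a 1 + t *\<^sub>R axis b 1)
      = pd a (pd b f) (x + s' *\<^sub>R axis b 1 + t' *\<^sub>R axis a 1)"
    using st(5) st'(5) h(1) by (simp add: algebra_simps)
  moreover have "dist (x + s *\<^sub>R axis a 1 + t *\<^sub>R axis b 1) x < r"
    "dist (x + s' *\<^sub>R axis b 1 + t' *\<^sub>R axis a 1) x < r"
    using near[of s t a b] near[of s' t' b a] st st' h by auto
  ultimately show ?thesis by blast
qed

lemma pd_commute:
  fixes x :: "real^'n::finite"
  assumes Om: "open Om" "x \<in> Om" and f: "smooth_on Om f"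
  shows "pd a (pd b f) x = pd b (pd a f) x"
proof (rule ccontr)
  define A where "A = pd b (pd a f)"
  define B where "B = pd a (pd b f)"
  assume "pd a (pd b f) x \<noteq> pd b (pd a f) x"
  then have e: "\<bar>A x - B x\<bar> / 2 > 0" by (simp add: A_def B_def)
  have "isCont A x" "isCont B x"
    using smooth_on_continuous_on_pd_pd[OF f] Om continuous_on_eq_continuous_at
    unfolding A_def B_def by blast+
  then obtain d1 d2 where d: "d1 > 0" "\<And>y. dist y x < d1 \<Longrightarrow> dist (A y) (A x) < \<bar>A x - B x\<bar> / 2"
    "d2 > 0" "\<And>y. dist y x < d2 \<Longrightarrow> dist (B y) (B x) < \<bar>A x - B x\<bar> / 2"
    using e unfolding continuous_at_eps_delta by metis
  obtain p q where pq: "dist p x < min d1 d2" "dist q x < min d1 d2" and "A p = B q"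
    using mixed_pds_agree_nearby[OF Om f, where r = "min d1 d2" and a = a and b = b] d
    unfolding A_def B_def by auto
  moreover have "dist (A p) (A x) < \<bar>A x - B x\<bar> / 2" "dist (B q) (B x) < \<bar>A x - B x\<bar> / 2"
    using d pq by auto
  ultimately show False by (simp add: dist_real_def abs_if split: if_split_asm)
qed

section \<open>Lie derivatives along n and the tensor Sigma\<close>

lemma sum_rotate3: "(\<Sum>i\<in>A. \<Sum>j\<in>B. \<Sum>k\<in>C. F i j k) = (\<Sum>j\<in>B. \<Sum>k\<in>C. \<Sum>i\<in>A. F i j k)"
  by (subst sum.swap) (simp add: sum.swap[of _ A C])

lemma sum_swap_inner: "(\<Sum>i\<in>A. \<Sum>j\<in>B. \<Sum>k\<in>C. F i j k) = (\<Sum>i\<in>A. \<Sum>k\<in>C. \<Sum>j\<in>B. F i j k)"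
  by (simp add: sum.swap[of _ B C])

definition lie1 :: "(real^'n::finite \<Rightarrow> 'n \<Rightarrow> real) \<Rightarrow> (real^'n \<Rightarrow> 'n \<Rightarrow> real)
    \<Rightarrow> real^'n \<Rightarrow> 'n \<Rightarrow> real" where
  "lie1 n w y b = (\<Sum>e\<in>UNIV. n y e * pd e (\<lambda>z. w z b) y)
     + (\<Sum>e\<in>UNIV. w y e * pd b (\<lambda>z. n z e) y)"

definition lie2 :: "(real^'n::finite \<Rightarrow> 'n \<Rightarrow> real) \<Rightarrow> (real^'n \<Rightarrow> 'n \<Rightarrow> 'n \<Rightarrow> real)
    \<Rightarrow> real^'n \<Rightarrow> 'n \<Rightarrow> 'n \<Rightarrow> real" where
  "lie2 n T y a b = (\<Sum>e\<in>UNIV. n y e * pd e (\<lambda>z. T z a b) y)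
     + (\<Sum>e\<in>UNIV. T y e b * pd a (\<lambda>z. n z e) y) + (\<Sum>e\<in>UNIV. T y a e * pd b (\<lambda>z. n z e) y)"

definition lie3 :: "(real^'n::finite \<Rightarrow> 'n \<Rightarrow> real) \<Rightarrow> (real^'n \<Rightarrow> 'n \<Rightarrow> 'n \<Rightarrow> 'n \<Rightarrow> real)
    \<Rightarrow> real^'n \<Rightarrow> 'n \<Rightarrow> 'n \<Rightarrow> 'n \<Rightarrow> real" where
  "lie3 n T y a b c = (\<Sum>e\<in>UNIV. n y e * pd e (\<lambda>z. T z a b c) y)
     + (\<Sum>e\<in>UNIV. T y e b c * pd a (\<lambda>z. n z e) y) + (\<Sum>e\<in>UNIV. T y a e c * pd b (\<lambda>z. n z e) y)
     + (\<Sum>e\<in>UNIV. T y a b e * pd c (\<lambda>z. n z e) y)"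

text \<open>The components Sigma^d_ab of Lie_n nabla, for the connection with coefficients G.\<close>

definition lie_connection :: "(real^'n::finite \<Rightarrow> 'n \<Rightarrow> 'n \<Rightarrow> 'n \<Rightarrow> real) \<Rightarrow> (real^'n \<Rightarrow> 'n \<Rightarrow> real)
    \<Rightarrow> real^'n \<Rightarrow> 'n \<Rightarrow> 'n \<Rightarrow> 'n \<Rightarrow> real" where
  "lie_connection G n x d a b = (\<Sum>e\<in>UNIV. n x e * pd e (\<lambda>z. G z d a b) x)
     - (\<Sum>e\<in>UNIV. G x e a b * pd e (\<lambda>z. n z d) x)
     + (\<Sum>e\<in>UNIV. G x d e b * pd a (\<lambda>z. n z e) x) + (\<Sum>e\<in>UNIV. G x d a e * pd b (\<lambda>z. n z e) x)
     + pd a (pd b (\<lambda>z. n z d)) x"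

lemma Sigma_circ_components:
  fixes X W n :: "real^'n::finite \<Rightarrow> 'n \<Rightarrow> real"
  assumes Om: "open Om" "x \<in> Om"
    and X: "\<forall>a. smooth_on Om (\<lambda>x. X x a)" and W: "\<forall>a. smooth_on Om (\<lambda>x. W x a)"
    and n: "\<forall>a. smooth_on Om (\<lambda>x. n x a)" and G: "\<forall>d a b. smooth_on Om (\<lambda>x. G x d a b)"
  shows "Sigma_circ G n X W x d = (\<Sum>a\<in>UNIV. \<Sum>b\<in>UNIV. lie_connection G n x d a b * X x a * W x b)"
proof -
  have dG: "\<forall>i d a b. pd_differentiable i (\<lambda>z. G z d a b) x"
    using G Om by (blast intro: smooth_on_pd_differentiable)
  note dX = smooth_on_pd_differentiable_all[OF Om(2) X]
   and dW = smooth_on_pd_differentiable_all[OF Om(2) W]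
   and dn = smooth_on_pd_differentiable_all[OF Om(2) n]
  have sW: "\<forall>i j a. pd i (pd j (\<lambda>z. W z a)) x = pd j (pd i (\<lambda>z. W z a)) x"
    using W by (blast intro: pd_commute[OF Om])
  \<comment> \<open>Once expanded, the second derivatives of W cancel by sW and the remaining triple
    sums agree up to the order of summation.\<close>
  show ?thesis
    unfolding Sigma_circ_def lieV_def nablaXW_def covv_def lie_connection_def
    apply (simp add: dX dW dn dG)
    apply (simp add: sum_distrib_left sum_distrib_right sum_subtractf sum.distrib sum_negf algebra_simps)
    apply (subst (1 2 3 4) sum.swap)
    apply (subst (1 2 4 6) sum_rotate3)
    apply (subst (3) sum_swap_inner)
    apply (subst (5) sum_rotate3)
    apply (subst (5) sum_rotate3)
    apply (simp add: sW add_ac mult_ac)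
    apply (rule sum_swap_inner)
    done
qed

lemma lie2_cov1_commute:
  fixes w n :: "real^'n::finite \<Rightarrow> 'n \<Rightarrow> real"
  assumes Om: "open Om" "x \<in> Om" and w: "\<forall>a. smooth_on Om (\<lambda>x. w x a)"
    and n: "\<forall>a. smooth_on Om (\<lambda>x. n x a)" and G: "\<forall>d a b. smooth_on Om (\<lambda>x. G x d a b)"
  shows "lie2 n (cov1 G w) x a b - cov1 G (lie1 n w) x a b
    = - (\<Sum>f\<in>UNIV. lie_connection G n x f a b * w x f)"
proof -
  have dG: "\<forall>i d a b. pd_differentiable i (\<lambda>z. G z d a b) x"
    using G Om by (blast intro: smooth_on_pd_differentiable)
  note dw = smooth_on_pd_differentiable_all[OF Om(2) w]
   and dn = smooth_on_pd_differentiable_all[OF Om(2) n]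
  have sw: "\<forall>i j a. pd i (pd j (\<lambda>z. w z a)) x = pd j (pd i (\<lambda>z. w z a)) x"
    using w by (blast intro: pd_commute[OF Om])
  show ?thesis
    unfolding lie2_def cov1_def lie1_def lie_connection_def
    apply (simp add: dw dn dG)
    apply (simp add: sum_distrib_left sum_distrib_right sum_subtractf sum.distrib sum_negf algebra_simps)
    apply (subst (1 2 3 4 5) sum.swap)
    apply (simp add: sw add_ac)
    done
qed

lemma lie3_cov2_commute:
  fixes T :: "real^'n::finite \<Rightarrow> 'n \<Rightarrow> 'n \<Rightarrow> real" and n :: "real^'n \<Rightarrow> 'n \<Rightarrow> real"
  assumes Om: "open Om" "x \<in> Om" and T: "\<forall>a b. smooth_on Om (\<lambda>x. T x a b)"
    and n: "\<forall>a. smooth_on Om (\<lambda>x. n x a)" and G: "\<forall>d a b. smooth_on Om (\<lambda>x. G x d a b)"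
  shows "lie3 n (cov2 G T) x a b c - cov2 G (lie2 n T) x a b c
    = - (\<Sum>f\<in>UNIV. lie_connection G n x f a b * T x f c) - (\<Sum>f\<in>UNIV. lie_connection G n x f a c * T x b f)"
proof -
  have dG: "\<forall>i d a b. pd_differentiable i (\<lambda>z. G z d a b) x"
    and dT: "\<forall>i a b. pd_differentiable i (\<lambda>z. T z a b) x"
    and dT': "\<forall>i j a b. pd_differentiable i (pd j (\<lambda>z. T z a b)) x"
    using G T Om by (blast intro: smooth_on_pd_differentiable smooth_on_pd_pd_differentiable)+
  note dn = smooth_on_pd_differentiable_all[OF Om(2) n]
  have sT: "\<forall>i j a b. pd i (pd j (\<lambda>z. T z a b)) x = pd j (pd i (\<lambda>z. T z a b)) x"
    using T by (blast intro: pd_commute[OF Om])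
  show ?thesis
    unfolding lie3_def cov2_def lie2_def lie_connection_def
    apply (simp add: dT dT' dn dG)
    apply (simp add: sum_distrib_left sum_distrib_right sum_subtractf sum.distrib sum_negf algebra_simps)
    apply (subst (1 2 3 4 5 6 7 8 9 10 11 12) sum.swap)
    apply (simp add: sT add_ac)
    done
qed

lemma lie3_cong_open:
  assumes "open Om" "x \<in> Om" "\<And>y a b c. y \<in> Om \<Longrightarrow> T y a b c = T' y a b c"
  shows "lie3 n T x a b c = lie3 n T' x a b c"
proof -
  have "pd e (\<lambda>z. T z a b c) x = pd e (\<lambda>z. T' z a b c) x" for e a b c
    by (rule pd_cong_open[OF assms(1,2)]) (simp add: assms(3))
  then show ?thesis unfolding lie3_def using assms(2,3) by simp
qed

lemma lie2_cong_open:
  assumes "open Om" "x \<in> Om" "\<And>y a b. y \<in> Om \<Longrightarrow> T y a b = T' y a b"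
  shows "lie2 n T x a b = lie2 n T' x a b"
proof -
  have "pd e (\<lambda>z. T z a b) x = pd e (\<lambda>z. T' z a b) x" for e a b
    by (rule pd_cong_open[OF assms(1,2)]) (simp add: assms(3))
  then show ?thesis unfolding lie2_def using assms(2,3) by simp
qed

lemma cov1_cong_open:
  assumes "open Om" "x \<in> Om" "\<And>y b. y \<in> Om \<Longrightarrow> w y b = w' y b"
  shows "cov1 G w x a b = cov1 G w' x a b"
proof -
  have "pd e (\<lambda>z. w z b) x = pd e (\<lambda>z. w' z b) x" for e b
    by (rule pd_cong_open[OF assms(1,2)]) (simp add: assms(3))
  then show ?thesis unfolding cov1_def using assms(2,3) by simp
qed

lemma lie2_add_transpose:
  assumes "\<forall>i a b. pd_differentiable i (\<lambda>z. A z a b) x"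
  shows "lie2 n (\<lambda>y a b. A y a b + A y b a) x a b = lie2 n A x a b + lie2 n A x b a"
  unfolding lie2_def using assms by (simp add: sum.distrib algebra_simps)

lemma lie2_scalar_mult:
  assumes "\<forall>i a b. pd_differentiable i (\<lambda>z. A z a b) x" and "\<forall>i. pd_differentiable i f x"
  shows "lie2 n (\<lambda>y a b. c * f y * A y a b) x a b
    = c * ((\<Sum>e\<in>UNIV. n x e * pd e f x) * A x a b + f x * lie2 n A x a b)"
  unfolding lie2_def using assms
  by (simp add: sum_distrib_left sum_distrib_right sum.distrib algebra_simps)

lemma lie3_sym_tensor_product:
  fixes A :: "real^'n::finite \<Rightarrow> 'n \<Rightarrow> 'n \<Rightarrow> real" and B :: "real^'n \<Rightarrow> 'n \<Rightarrow> real"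
  assumes "\<forall>i a b. pd_differentiable i (\<lambda>z. A z a b) x" and "\<forall>i a. pd_differentiable i (\<lambda>z. B z a) x"
  shows "lie3 n (\<lambda>y a b c. - A y a b * B y c - A y a c * B y b) x a b c
    = - (lie2 n A x a b * B x c + A x a b * lie1 n B x c) - (lie2 n A x a c * B x b + A x a c * lie1 n B x b)"
  unfolding lie3_def lie2_def lie1_def using assms
  by (simp add: sum_distrib_left sum_distrib_right sum_subtractf sum.distrib sum_negf algebra_simps)

lemma cov2_sym_product_gradient:
  fixes T :: "real^'n::finite \<Rightarrow> 'n \<Rightarrow> 'n \<Rightarrow> real" and w :: "real^'n \<Rightarrow> 'n \<Rightarrow> real"
  assumes "\<forall>i a b. pd_differentiable i (\<lambda>z. T z a b) x" and "\<forall>i a. pd_differentiable i (\<lambda>z. w z a) x"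
    and "\<forall>i. pd_differentiable i f x" and "\<forall>i j. pd_differentiable i (pd j f) x"
  shows "cov2 G (\<lambda>y b c. k * T y b c - w y b * pd c f y - w y c * pd b f y) x a b c
    = k * cov2 G T x a b c - (cov1 G w x a b * pd c f x + w x b * hess G f x a c)
      - (cov1 G w x a c * pd b f x + w x c * hess G f x a b)"
  unfolding cov2_def cov1_def hess_def using assms
  by (simp add: sum_distrib_left sum_distrib_right sum_subtractf sum.distrib algebra_simps)

lemma cov1_gradient_product:
  assumes "\<forall>i. pd_differentiable i f x" and "\<forall>i j. pd_differentiable i (pd j f) x"
    and "\<forall>i. pd_differentiable i h x" and "\<forall>i j. pd_differentiable i (pd j h) x"
  shows "cov1 G (\<lambda>y b. pd b f y * h y + f y * pd b h y) x a b
    = hess G f x a b * h x + pd b f x * pd a h x + pd a f x * pd b h x + f x * hess G h x a b"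
  unfolding cov1_def hess_def using assms
  by (simp add: sum_distrib_left sum_distrib_right sum_subtractf sum.distrib algebra_simps)

lemma decompose_by_inverse:
  fixes S :: "'n::finite \<Rightarrow> real"
  assumes "\<And>a c. (\<Sum>b\<in>UNIV. P a b * g b c) + n a * l c = (if a = c then 1 else 0)"
  shows "S d = (\<Sum>c\<in>UNIV. P d c * (\<Sum>f\<in>UNIV. g c f * S f)) + n d * (\<Sum>f\<in>UNIV. l f * S f)"
proof -
  have "S d = (\<Sum>f\<in>UNIV. (if d = f then 1 else 0) * S f)"
    by (simp add: if_distrib[of "\<lambda>u. u * _"] cong: if_cong)
  also have "\<dots> = (\<Sum>f\<in>UNIV. ((\<Sum>c\<in>UNIV. P d c * g c f) + n d * l f) * S f)"
    using assms by simp
  also have "\<dots> = (\<Sum>f\<in>UNIV. \<Sum>c\<in>UNIV. P d c * (g c f * S f)) + (\<Sum>f\<in>UNIV. n d * (l f * S f))"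
    by (simp add: distrib_right sum.distrib sum_distrib_right mult.assoc)
  also have "\<dots> = (\<Sum>c\<in>UNIV. \<Sum>f\<in>UNIV. P d c * (g c f * S f)) + (\<Sum>f\<in>UNIV. n d * (l f * S f))"
    by (subst sum.swap) (rule refl)
  also have "\<dots> = (\<Sum>c\<in>UNIV. P d c * (\<Sum>f\<in>UNIV. g c f * S f)) + n d * (\<Sum>f\<in>UNIV. l f * S f)"
    by (simp add: sum_distrib_left)
  finally show ?thesis .
qed

lemma koszul_inversion:
  fixes S K :: "'n \<Rightarrow> 'n \<Rightarrow> 'n \<Rightarrow> real"
  assumes "\<And>c a b. S c a b = S c b a" and "\<And>a b c. K a b c = S c a b + S b a c"
  shows "S c a b = (K a b c + K b a c - K c a b) / 2"
  using assms[of c a b] assms[of b a c] assms[of a b c] by simp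

lemma hess_sym:
  assumes "open Om" "x \<in> Om" "smooth_on Om f" "\<And>c. G x c a b = G x c b a"
  shows "hess G f x a b = hess G f x b a"
  unfolding hess_def using pd_commute[OF assms(1-3)] assms(4) by simp

section \<open>The connection of metric hypersurface data\<close>

locale circ_hypersurface =
  fixes Om :: "(real^'n::finite) set"
    and g P :: "real^'n \<Rightarrow> 'n \<Rightarrow> 'n \<Rightarrow> real" and l n :: "real^'n \<Rightarrow> 'n \<Rightarrow> real"
    and l2 n2 :: "real^'n \<Rightarrow> real" and G :: "real^'n \<Rightarrow> 'n \<Rightarrow> 'n \<Rightarrow> 'n \<Rightarrow> real"
  assumes data: "metric_hypersurface_data Om g l l2"
    and inv: "inverse_data Om g l l2 P n n2"
    and smooth_n: "\<forall>a. smooth_on Om (\<lambda>x. n x a)"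
    and smooth_n2: "smooth_on Om n2"
    and conn: "circ_connection Om g l l2 n n2 G"
begin

abbreviation U where "U \<equiv> UU g l n n2"

lemma open_Om: "open Om"
  and smooth_g: "\<forall>a b. smooth_on Om (\<lambda>x. g x a b)"
  and smooth_l: "\<forall>a. smooth_on Om (\<lambda>x. l x a)"
  and smooth_l2: "smooth_on Om l2"
  and g_sym: "y \<in> Om \<Longrightarrow> g y a b = g y b a"
  using data unfolding metric_hypersurface_data_def by auto

lemma smooth_G: "\<forall>d a b. smooth_on Om (\<lambda>x. G x d a b)"
  and G_sym: "y \<in> Om \<Longrightarrow> G y d a b = G y d b a"
  and cov2_g: "y \<in> Om \<Longrightarrow> cov2 G g y a b c = - U y a b * l y c - U y a c * l y b"
  and cov1_l_sym: "y \<in> Om \<Longrightarrow> cov1 G l y a b + cov1 G l y b a = - 2 * l2 y * U y a b"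
  using conn unfolding circ_connection_def by auto

lemma l_n: "y \<in> Om \<Longrightarrow> (\<Sum>a\<in>UNIV. l y a * n y a) + n2 y * l2 y = 1"
  and P_l: "y \<in> Om \<Longrightarrow> (\<Sum>b\<in>UNIV. P y a b * l y b) + l2 y * n y a = 0"
  and P_g: "y \<in> Om \<Longrightarrow> (\<Sum>b\<in>UNIV. P y a b * g y b c) + n y a * l y c = (if a = c then 1 else 0)"
  using inv unfolding inverse_data_def by blast+

lemma pd_differentiable_data:
  assumes "y \<in> Om"
  shows "\<forall>i a b. pd_differentiable i (\<lambda>z. g z a b) y" "\<forall>i j a b. pd_differentiable i (pd j (\<lambda>z. g z a b)) y"
    "\<forall>i a. pd_differentiable i (\<lambda>z. l z a) y" "\<forall>i j a. pd_differentiable i (pd j (\<lambda>z. l z a)) y"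
    "\<forall>i a. pd_differentiable i (\<lambda>z. n z a) y" "\<forall>i j a. pd_differentiable i (pd j (\<lambda>z. n z a)) y"
    "\<forall>i. pd_differentiable i l2 y" "\<forall>i j. pd_differentiable i (pd j l2) y"
    "\<forall>i. pd_differentiable i n2 y" "\<forall>i j. pd_differentiable i (pd j n2) y"
    "\<forall>i d a b. pd_differentiable i (\<lambda>z. G z d a b) y"
  using assms smooth_g smooth_l smooth_n smooth_l2 smooth_n2 smooth_G
  by (blast intro: smooth_on_pd_differentiable smooth_on_pd_pd_differentiable)+

lemma pd_differentiable_U: "y \<in> Om \<Longrightarrow> \<forall>i a b. pd_differentiable i (\<lambda>z. U z a b) y"
  unfolding UU_def by (simp add: pd_differentiable_data)

lemma U_sym: "y \<in> Om \<Longrightarrow> U y a b = U y b a"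
proof -
  assume y: "y \<in> Om"
  have "pd c (\<lambda>z. g z a b) y = pd c (\<lambda>z. g z b a) y" for c
    by (rule pd_cong_open[OF open_Om y]) (simp add: g_sym)
  then show ?thesis unfolding UU_def using g_sym[OF y] by (simp add: algebra_simps)
qed

lemma lie2_g: "lie2 n g y b c = 2 * U y b c - l y b * pd c n2 y - l y c * pd b n2 y"
  by (simp add: lie2_def UU_def sum.distrib field_simps)

lemma lie1_l:
  assumes y: "y \<in> Om"
  shows "lie1 n l y b = 2 * ss n l y b - (pd b n2 y * l2 y + n2 y * pd b l2 y)"
proof -
  have "pd b (\<lambda>z. (\<Sum>a\<in>UNIV. l z a * n z a) + n2 z * l2 z) y = pd b (\<lambda>z. 1) y"
    by (rule pd_cong_open[OF open_Om y]) (simp add: l_n)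
  then have "(\<Sum>a\<in>UNIV. pd b (\<lambda>z. l z a) y * n y a + l y a * pd b (\<lambda>z. n z a) y)
      + (pd b n2 y * l2 y + n2 y * pd b l2 y) = 0"
    using pd_differentiable_data[OF y] by simp
  moreover have "2 * ss n l y b = (\<Sum>a\<in>UNIV. n y a * pd a (\<lambda>z. l z b) y - n y a * pd b (\<lambda>z. l z a) y)"
    unfolding ss_def FF_def sum_distrib_left by (rule sum.cong) (auto simp: field_simps)
  ultimately show ?thesis
    unfolding lie1_def by (simp add: sum.distrib sum_subtractf algebra_simps)
qed

lemma lie_connection_sym:
  assumes x: "x \<in> Om"
  shows "lie_connection G n x d a b = lie_connection G n x d b a"
proof -
  have "pd e (\<lambda>z. G z d a b) x = pd e (\<lambda>z. G z d b a) x" for e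
    by (rule pd_cong_open[OF open_Om x]) (simp add: G_sym)
  moreover have "pd a (pd b (\<lambda>z. n z d)) x = pd b (pd a (\<lambda>z. n z d)) x"
    using smooth_n by (blast intro: pd_commute[OF open_Om x])
  ultimately show ?thesis
    unfolding lie_connection_def using G_sym[OF x] by (simp add: algebra_simps)
qed

lemma hess_sym_at: "x \<in> Om \<Longrightarrow> smooth_on Om f \<Longrightarrow> hess G f x a b = hess G f x b a"
  by (rule hess_sym[OF open_Om]) (simp_all add: G_sym)

lemma lie2_U_sym:
  assumes x: "x \<in> Om"
  shows "lie2 n U x a b = lie2 n U x b a"
proof -
  have "pd e (\<lambda>z. U z a b) x = pd e (\<lambda>z. U z b a) x" for e a b
    by (rule pd_cong_open[OF open_Om x]) (simp add: U_sym)
  then show ?thesis unfolding lie2_def using U_sym[OF x] by (simp add: algebra_simps)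
qed

lemma cov2_U_sym:
  assumes x: "x \<in> Om"
  shows "cov2 G U x a b c = cov2 G U x a c b"
proof -
  have "pd e (\<lambda>z. U z a b) x = pd e (\<lambda>z. U z b a) x" for e a b
    by (rule pd_cong_open[OF open_Om x]) (simp add: U_sym)
  then show ?thesis unfolding cov2_def using U_sym[OF x] by (simp add: algebra_simps)
qed

text \<open>Lie_n (nabla gamma) - nabla (Lie_n gamma) = - Sigma . gamma, with both terms on the left
  evaluated by the defining identities of nabla.\<close>

lemma lie_connection_gamma_sum:
  assumes x: "x \<in> Om"
  shows "(\<Sum>f\<in>UNIV. lie_connection G n x f a b * g x f c) + (\<Sum>f\<in>UNIV. lie_connection G n x f a c * g x b f)
    = 2 * cov2 G U x a b c - (cov1 G l x a b * pd c n2 x + l x b * hess G n2 x a c)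
      - (cov1 G l x a c * pd b n2 x + l x c * hess G n2 x a b)
      + (lie2 n U x a b * l x c + U x a b * lie1 n l x c) + (lie2 n U x a c * l x b + U x a c * lie1 n l x b)"
proof -
  note dx = pd_differentiable_data[OF x] pd_differentiable_U[OF x]
  have "lie3 n (cov2 G g) x a b c = lie3 n (\<lambda>y a b c. - U y a b * l y c - U y a c * l y b) x a b c"
    by (rule lie3_cong_open[OF open_Om x]) (simp add: cov2_g)
  also have "\<dots> = - (lie2 n U x a b * l x c + U x a b * lie1 n l x c)
      - (lie2 n U x a c * l x b + U x a c * lie1 n l x b)"
    using dx by (intro lie3_sym_tensor_product) auto
  finally have "lie3 n (cov2 G g) x a b c = \<dots>" .
  moreover have "cov2 G (lie2 n g) x a b c = 2 * cov2 G U x a b c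
      - (cov1 G l x a b * pd c n2 x + l x b * hess G n2 x a c)
      - (cov1 G l x a c * pd b n2 x + l x c * hess G n2 x a b)"
    unfolding lie2_g[abs_def] using dx by (intro cov2_sym_product_gradient) auto
  ultimately show ?thesis
    using lie3_cov2_commute[OF open_Om x smooth_g smooth_n smooth_G, of a b c] by linarith
qed

definition koszul_U :: "real^'n \<Rightarrow> 'n \<Rightarrow> 'n \<Rightarrow> 'n \<Rightarrow> real" where
  "koszul_U x c a b = cov2 G U x a b c + cov2 G U x b c a - cov2 G U x c a b
     + (2 * ss n l x c - n2 x * pd c l2 x) * U x a b
     + (FF l x c a * pd b n2 x + FF l x c b * pd a n2 x)"

lemma gamma_lie_connection:
  assumes x: "x \<in> Om"
  shows "(\<Sum>f\<in>UNIV. g x c f * lie_connection G n x f a b)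
    = koszul_U x c a b + l x c * (lie2 n U x a b - hess G n2 x a b)"
proof -
  have cov1_l_x: "cov1 G l x b a = - 2 * l2 x * U x a b - cov1 G l x a b" for a b
    using cov1_l_sym[OF x] by (simp add: algebra_simps)
  have cov1_l_F: "cov1 G l x c a = 2 * FF l x c a + cov1 G l x a c" for c a
    unfolding cov1_def FF_def using G_sym[OF x] by (simp add: field_simps)
  define K where "K a b c = (\<Sum>f\<in>UNIV. lie_connection G n x f a b * g x f c)
    + (\<Sum>f\<in>UNIV. lie_connection G n x f a c * g x b f)" for a b c
  have "(\<Sum>f\<in>UNIV. g x c f * lie_connection G n x f a b) = (K a b c + K b a c - K c a b) / 2"
    by (rule koszul_inversion) (auto simp: K_def lie_connection_sym[OF x] g_sym[OF x] mult.commute)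
  also have "\<dots> = koszul_U x c a b + l x c * (lie2 n U x a b - hess G n2 x a b)"
    unfolding K_def lie_connection_gamma_sum[OF x] koszul_U_def
    by (simp add: hess_sym_at[OF x smooth_n2] lie2_U_sym[OF x, of b a] lie2_U_sym[OF x, of c a]
        lie2_U_sym[OF x, of c b] U_sym[OF x, of b a] U_sym[OF x, of c a] U_sym[OF x, of c b]
        cov2_U_sym[OF x, of b a c] cov1_l_x[of a b] cov1_l_F[of c a] cov1_l_F[of c b] lie1_l[OF x]
        algebra_simps; simp add: field_simps)
  finally show ?thesis .
qed

lemma cov1_lie1_l:
  assumes x: "x \<in> Om"
  shows "cov1 G (lie1 n l) x a b = 2 * cov1 G (ss n l) x a b
    - (hess G n2 x a b * l2 x + pd b n2 x * pd a l2 x + pd a n2 x * pd b l2 x + n2 x * hess G l2 x a b)"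
proof -
  note dx = pd_differentiable_data[OF x]
  have "cov1 G (lie1 n l) x a b
      = cov1 G (\<lambda>y b. 2 * ss n l y b - (pd b n2 y * l2 y + n2 y * pd b l2 y)) x a b"
    by (rule cov1_cong_open[OF open_Om x]) (simp add: lie1_l)
  also have "\<dots> = 2 * cov1 G (ss n l) x a b - cov1 G (\<lambda>y b. pd b n2 y * l2 y + n2 y * pd b l2 y) x a b"
    unfolding cov1_def ss_def FF_def using dx by (simp add: sum_subtractf sum_distrib_left algebra_simps)
  also have "cov1 G (\<lambda>y b. pd b n2 y * l2 y + n2 y * pd b l2 y) x a b
      = hess G n2 x a b * l2 x + pd b n2 x * pd a l2 x + pd a n2 x * pd b l2 x + n2 x * hess G l2 x a b"
    using dx by (intro cov1_gradient_product) auto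
  finally show ?thesis .
qed

text \<open>The same for l; symmetrising in a and b leaves only the prescribed part of nabla l.\<close>

lemma l_lie_connection:
  assumes x: "x \<in> Om"
  shows "(\<Sum>f\<in>UNIV. l x f * lie_connection G n x f a b)
    = cov1 G (ss n l) x a b + cov1 G (ss n l) x b a
      - (l2 x * hess G n2 x a b + pd a n2 x * pd b l2 x + pd b n2 x * pd a l2 x + n2 x * hess G l2 x a b)
      + (\<Sum>c\<in>UNIV. n x c * pd c l2 x) * U x a b + l2 x * lie2 n U x a b"
proof -
  note dx = pd_differentiable_data[OF x] pd_differentiable_U[OF x]
  have "lie2 n (cov1 G l) x a b + lie2 n (cov1 G l) x b a
      = lie2 n (\<lambda>y a b. cov1 G l y a b + cov1 G l y b a) x a b"
    unfolding cov1_def using dx by (intro lie2_add_transpose[symmetric]) simp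
  also have "\<dots> = lie2 n (\<lambda>y a b. - 2 * l2 y * U y a b) x a b"
    by (rule lie2_cong_open[OF open_Om x]) (simp add: cov1_l_sym)
  also have "\<dots> = - 2 * ((\<Sum>c\<in>UNIV. n x c * pd c l2 x) * U x a b + l2 x * lie2 n U x a b)"
    using dx by (intro lie2_scalar_mult) auto
  finally have "lie2 n (cov1 G l) x a b + lie2 n (cov1 G l) x b a = \<dots>" .
  then show ?thesis
    using lie2_cov1_commute[OF open_Om x smooth_l smooth_n smooth_G, of a b]
      lie2_cov1_commute[OF open_Om x smooth_l smooth_n smooth_G, of b a]
      cov1_lie1_l[OF x, of a b] cov1_lie1_l[OF x, of b a] lie_connection_sym[OF x]
      hess_sym_at[OF x smooth_n2, of a b] hess_sym_at[OF x smooth_l2, of a b]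
    by (simp add: mult.commute algebra_simps)
qed

lemma lie_connection_eq_rhs:
  assumes x: "x \<in> Om"
  shows "lie_connection G n x d a b = rhs g l l2 P n n2 G x d a b"
proof -
  have "lie_connection G n x d a b
      = (\<Sum>c\<in>UNIV. P x d c * (\<Sum>f\<in>UNIV. g x c f * lie_connection G n x f a b))
        + n x d * (\<Sum>f\<in>UNIV. l x f * lie_connection G n x f a b)"
    by (rule decompose_by_inverse) (rule P_g[OF x])
  also have "(\<Sum>c\<in>UNIV. P x d c * (\<Sum>f\<in>UNIV. g x c f * lie_connection G n x f a b))
      = (\<Sum>c\<in>UNIV. P x d c * koszul_U x c a b)
        + (\<Sum>c\<in>UNIV. P x d c * l x c) * (lie2 n U x a b - hess G n2 x a b)"
    by (simp only: gamma_lie_connection[OF x] distrib_left sum.distrib sum_distrib_right mult.assoc)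
  also have "(\<Sum>c\<in>UNIV. P x d c * l x c) = - l2 x * n x d"
    using P_l[OF x, of d] by linarith
  finally show ?thesis
    unfolding rhs_def l_lie_connection[OF x] koszul_U_def by (simp add: algebra_simps)
qed

end

theorem lemma2p14:
  fixes Om :: "(real^'n::finite) set"
    and g :: "real^'n \<Rightarrow> 'n \<Rightarrow> 'n \<Rightarrow> real" and l :: "real^'n \<Rightarrow> 'n \<Rightarrow> real"
    and l2 :: "real^'n \<Rightarrow> real"
    and P :: "real^'n \<Rightarrow> 'n \<Rightarrow> 'n \<Rightarrow> real" and n :: "real^'n \<Rightarrow> 'n \<Rightarrow> real"
    and n2 :: "real^'n \<Rightarrow> real"
    and G :: "real^'n \<Rightarrow> 'n \<Rightarrow> 'n \<Rightarrow> 'n \<Rightarrow> real"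
    and X W :: "real^'n \<Rightarrow> 'n \<Rightarrow> real"
  assumes data: "metric_hypersurface_data Om g l l2"
    and inv: "inverse_data Om g l l2 P n n2"
    and smoothP: "\<forall>a b. smooth_on Om (\<lambda>x. P x a b)"
    and smoothn: "\<forall>a. smooth_on Om (\<lambda>x. n x a)"
    and smoothn2: "smooth_on Om n2"
    and conn: "circ_connection Om g l l2 n n2 G"
    and smoothX: "\<forall>a. smooth_on Om (\<lambda>x. X x a)"
    and smoothW: "\<forall>a. smooth_on Om (\<lambda>x. W x a)"
    and x: "x \<in> Om"
  shows "Sigma_circ G n X W x d =
         (\<Sum>a\<in>UNIV. \<Sum>b\<in>UNIV. rhs g l l2 P n n2 G x d a b * X x a * W x b)"
proof -
  interpret circ_hypersurface Om g P l n l2 n2 G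
    using data inv smoothn smoothn2 conn by unfold_locales
  show ?thesis
    using Sigma_circ_components[OF open_Om x smoothX smoothW smoothn smooth_G]
    by (simp add: lie_connection_eq_rhs[OF x])
qed

end
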